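(* Let $G$ be a totally disconnected locally compact group, $K\leq G$ a compact open subgroup and $\mathcal{G}=K\backslash G/K$ the quotient hypergroup. If $X$ is any $G$-boundary such that $K\backslash X$ is totally disconnected, then $K\backslash X$ (with $\mathrm{C}(K\backslash X)=\mathrm{C}(X)^K$ carrying its natural $\mathcal{G}$-action) is a $\mathcal{G}$-boundary.
   Context: A $G$-boundary is a compact $G$-space that is minimal (all orbits dense) and strongly proximal (for every Borel probability measure $\mu$ on $X$, the weak* closure of $G\mu$ contains a point mass). The quotient hypergroup $\mathcal{G}=K\backslash G/K$ has unit $K$, involution $\overline{KgK}=Kg^{-1}K$ and product $(KgK)*(KhK)=\frac{1}{[K:K\cap hKh^{-1}]}\sum_{l\in K/(K\cap hKh^{-1})}\delta_{KglhK}$ on (point masses of) elements. The $\mathcal{G}$-action on $\mathrm{C}(X)^K$ is $(KgK)f=\int_K k g f\,dk$ with $dk$ normalized Haar measure. A $\mathcal{G}$-action on a compact space $Y$ is a family of unital completely positive maps $\alpha_g$ on $\mathrm{C}(Y)$, $g \in \mathcal{G}$, with $\alpha_e=\mathrm{id}$ and $\alpha_g\alpha_h=\int\alpha_k\,d(\delta_g*\delta_h)(k)$; $\mathcal{G}$ then acts on the probability measures $\mathcal{P}(Y)$ by the dual maps. Such a $\mathcal{G}$-space $Y$ is minimal if $\overline{\mathrm{conv}}(\mathcal{G}\delta_y)=\mathcal{P}(Y)$ for every $y\in Y$, strongly proximal if for every $\mu\in\mathcal{P}(Y)$ the closure $\overline{\mathcal{G}\mu}$ contains a point mass, and a $\mathcal{G}$-boundary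 if it is minimal and strongly proximal. *)

theory Defs
  imports "HOL-Analysis.Analysis"
begin

text \<open>The group G is a type of class topological_group_add (written additively; the class
  group_add does NOT assume commutativity).  X is a compact Hausdorff type.\<close>

definition totally_disconnected_set :: "'a::topological_space set \<Rightarrow> bool" where
  "totally_disconnected_set S \<longleftrightarrow> (\<forall>T. T \<subseteq> S \<and> connected T \<longrightarrow> (\<exists>a. T \<subseteq> {a}))"

definition totally_disconnected_top :: "'a topology \<Rightarrow> bool" where
  "totally_disconnected_top T \<longleftrightarrow> (\<forall>S. connectedin T S \<longrightarrow> (\<exists>a. S \<subseteq> {a}))"

definition is_subgroup :: "'g::group_add set \<Rightarrow> bool" where
  "is_subgroup K \<longleftrightarrow> 0 \<in> K \<and> (\<forall>a\<in>K. \<forall>b\<in>K. a + b \<in> K) \<and> (\<forall>a\<in>K. - a \<in> K)"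

definition continuous_action :: "('g::topological_group_add \<Rightarrow> 'x::topological_space \<Rightarrow> 'x) \<Rightarrow> bool" where
  "continuous_action act \<longleftrightarrow>
     continuous_on UNIV (\<lambda>p. act (fst p) (snd p)) \<and>
     (\<forall>x. act 0 x = x) \<and> (\<forall>g h x. act (g + h) x = act g (act h x))"

text \<open>States (= Radon probability measures, by Riesz) on a space of real functions C.\<close>
definition is_state :: "('x \<Rightarrow> real) set \<Rightarrow> (('x \<Rightarrow> real) \<Rightarrow> real) \<Rightarrow> bool" where
  "is_state C \<phi> \<longleftrightarrow>
     (\<forall>f\<in>C. \<forall>h\<in>C. \<phi> (\<lambda>x. f x + h x) = \<phi> f + \<phi> h) \<and>
     (\<forall>f\<in>C. \<forall>c. \<phi> (\<lambda>x. c * f x) = c * \<phi> f) \<and>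
     (\<forall>f\<in>C. (\<forall>x. 0 \<le> f x) \<longrightarrow> 0 \<le> \<phi> f) \<and>
     \<phi> (\<lambda>_. 1) = 1"

definition wstar_adherent :: "('x \<Rightarrow> real) set \<Rightarrow> (('x \<Rightarrow> real) \<Rightarrow> real) set \<Rightarrow> (('x \<Rightarrow> real) \<Rightarrow> real) \<Rightarrow> bool" where
  "wstar_adherent C S \<phi> \<longleftrightarrow>
     (\<forall>F \<epsilon>. finite F \<and> F \<subseteq> C \<and> 0 < \<epsilon> \<longrightarrow> (\<exists>\<psi>\<in>S. \<forall>f\<in>F. \<bar>\<psi> f - \<phi> f\<bar> < \<epsilon>))"

definition conv_functionals :: "(('x \<Rightarrow> real) \<Rightarrow> real) set \<Rightarrow> (('x \<Rightarrow> real) \<Rightarrow> real) set" where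
  "conv_functionals S = {\<psi>. \<exists>(n::nat) w \<phi>s. (\<forall>i<n. 0 \<le> w i \<and> \<phi>s i \<in> S) \<and> (\<Sum>i<n. w i) = 1 \<and>
        \<psi> = (\<lambda>f. \<Sum>i<n. w i * \<phi>s i f)}"

definition CX :: "('x::topological_space \<Rightarrow> real) set" where
  "CX = {f. continuous_on UNIV f}"

definition G_boundary :: "('g::topological_group_add \<Rightarrow> 'x::topological_space \<Rightarrow> 'x) \<Rightarrow> bool" where
  "G_boundary act \<longleftrightarrow>
     (\<forall>x. closure (range (\<lambda>g. act g x)) = UNIV) \<and>
     (\<forall>\<phi>. is_state CX \<phi> \<longrightarrow>
        (\<exists>x. wstar_adherent CX (range (\<lambda>g. (\<lambda>f. \<phi> (\<lambda>y. f (act g y))))) (\<lambda>f. f x)))"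

definition K_orbit :: "('g \<Rightarrow> 'x \<Rightarrow> 'x) \<Rightarrow> 'g set \<Rightarrow> 'x \<Rightarrow> 'x set" where
  "K_orbit act K x = (\<lambda>k. act k x) ` K"

definition orbit_space_top :: "('g \<Rightarrow> 'x::topological_space \<Rightarrow> 'x) \<Rightarrow> 'g set \<Rightarrow> 'x set topology" where
  "orbit_space_top act K =
     topology (\<lambda>U. U \<subseteq> range (K_orbit act K) \<and> open (\<Union>U))"

text \<open>C(K\textbackslash X) = C(X)^K, the K-invariant real continuous functions on X.\<close>
definition CKX :: "('g \<Rightarrow> 'x::topological_space \<Rightarrow> 'x) \<Rightarrow> 'g set \<Rightarrow> ('x \<Rightarrow> real) set" where
  "CKX act K = {f. continuous_on UNIV f \<and> (\<forall>k\<in>K. \<forall>x. f (act k x) = f x)}"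

text \<open>The action of KgK on C(X)^K: (KgK)f = \<integral>_K k g f dk, i.e. x \<mapsto> \<integral>_K f(g^-1 k^-1 x) dk.
  For K-invariant f the integrand is constant on left cosets of the open finite-index
  subgroup M = K \<inter> gKg^-1 of K, so the normalised Haar integral is the average over K/M.\<close>
definition hyp_cosets :: "'g::group_add set \<Rightarrow> 'g \<Rightarrow> 'g set set" where
  "hyp_cosets K g = (\<lambda>l. (\<lambda>m. l + m) ` (K \<inter> (\<lambda>k. g + k + - g) ` K)) ` K"

definition hyp_act :: "('g::group_add \<Rightarrow> 'x \<Rightarrow> 'x) \<Rightarrow> 'g set \<Rightarrow> 'g \<Rightarrow> ('x \<Rightarrow> real) \<Rightarrow> ('x \<Rightarrow> real)" where
  "hyp_act act K g f = (\<lambda>x. (1 / real (card (hyp_cosets K g))) *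
      (\<Sum>C\<in>hyp_cosets K g. f (act (- g) (act (- (SOME l. l \<in> C)) x))))"

text \<open>K\textbackslash X is a \<G>-boundary: minimal (closed convex hull of \<G>\<delta>_y is all of P(K\textbackslash X))
  and strongly proximal (closure of \<G>\<mu> contains a point mass), where \<G> acts on states
  by the dual maps and point masses are evaluations at points of X (y = Kx).\<close>
definition hyp_boundary :: "('g::group_add \<Rightarrow> 'x::topological_space \<Rightarrow> 'x) \<Rightarrow> 'g set \<Rightarrow> bool" where
  "hyp_boundary act K \<longleftrightarrow>
     (\<forall>x \<psi>. is_state (CKX act K) \<psi> \<longrightarrow>
        wstar_adherent (CKX act K)
          (conv_functionals (range (\<lambda>g. (\<lambda>f. hyp_act act K g f x)))) \<psi>) \<and>
     (\<forall>\<phi>. is_state (CKX act K) \<phi> \<longrightarrow>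
        (\<exists>x. wstar_adherent (CKX act K) (range (\<lambda>g. (\<lambda>f. \<phi> (hyp_act act K g f)))) (\<lambda>f. f x)))"

end

theory Submission
  imports Defs
begin

text \<open>Two facts drive the proof. First, every state on \<open>C(X)\<^sup>K\<close> is a weak* limit of finite
  convex combinations of point evaluations: cut the state along a partition of unity by tent
  functions, on whose pieces a given function is almost constant. Second, every state \<open>\<phi>\<close> on
  \<open>C(X)\<^sup>K\<close> lifts to a state \<open>\<Phi>\<close> on \<open>C(X)\<close> with \<open>\<Phi>(f \<circ> g) = \<phi>((Kg\<^sup>-\<^sup>1K) f)\<close>: averaging the
  point masses of such an approximation over the finite quotient of \<open>K\<close> by an open normal
  subgroup gives approximate lifts, and compactness of the bounded functionals an exact one.

  Strong proximality of \<open>K\X\<close> is then strong proximality of \<open>X\<close> applied to the lift. For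
  minimality, lift \<open>\<delta>\<^sub>x\<close> to \<open>\<Phi>\<close>: strong proximality of \<open>X\<close> puts some \<open>\<delta>\<^sub>z\<close> into the closure
  of \<open>G\<Phi>\<close>, and density of the orbit of \<open>z\<close> then puts every \<open>\<delta>\<^sub>y\<close> there, hence into the closure
  of \<open>\<G>\<delta>\<^sub>x\<close>; by the first fact every state lies in its closed convex hull.\<close>

section \<open>Cosets of open subgroups\<close>

lemma is_subgroup_0: "is_subgroup H \<Longrightarrow> 0 \<in> H"
  and is_subgroup_add: "is_subgroup H \<Longrightarrow> a \<in> H \<Longrightarrow> b \<in> H \<Longrightarrow> a + b \<in> H"
  and is_subgroup_minus: "is_subgroup H \<Longrightarrow> a \<in> H \<Longrightarrow> - a \<in> H"
  by (simp_all add: is_subgroup_def)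

lemma is_subgroup_Int: "is_subgroup A \<Longrightarrow> is_subgroup B \<Longrightarrow> is_subgroup (A \<inter> B)"
  by (simp add: is_subgroup_def)

lemma is_subgroup_Inter: "(\<And>H. H \<in> HH \<Longrightarrow> is_subgroup H) \<Longrightarrow> is_subgroup (\<Inter>HH)"
  by (simp add: is_subgroup_def)

definition conjugate :: "'g::group_add \<Rightarrow> 'g set \<Rightarrow> 'g set" where
  "conjugate g H = (\<lambda>k. g + k + - g) ` H"

lemma mem_conjugate_iff: "x \<in> conjugate g H \<longleftrightarrow> - g + x + g \<in> H"
proof
  assume "x \<in> conjugate g H"
  then show "- g + x + g \<in> H" by (auto simp: conjugate_def add.assoc)
next
  assume "- g + x + g \<in> H"
  moreover have "x = g + (- g + x + g) + - g" by (simp add: add.assoc)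
  ultimately show "x \<in> conjugate g H" unfolding conjugate_def by blast
qed

lemma is_subgroup_conjugate:
  assumes "is_subgroup H" shows "is_subgroup (conjugate g H)"
proof -
  have add: "- g + (a + b) + g = (- g + a + g) + (- g + b + g)" for a b
    by (simp add: add.assoc)
  have minus: "- g + - a + g = - (- g + a + g)" for a
    by (simp add: minus_add add.assoc)
  have diff: "- g + - a + g = - g - a + g" for a by simp
  show ?thesis
    using assms unfolding is_subgroup_def Ball_def mem_conjugate_iff
    by (simp only: add minus diff[symmetric]) simp
qed

lemma conjugate_conjugate: "conjugate a (conjugate b H) = conjugate (a + b) H"
  by (rule set_eqI) (simp only: mem_conjugate_iff minus_add add.assoc)

lemma conjugate_0 [simp]: "conjugate 0 H = H"
  by (simp add: conjugate_def)

lemma conjugate_subgroup_absorb: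
  assumes M: "is_subgroup M" and m: "m \<in> M"
  shows "conjugate (k + m) M = conjugate k M"
proof -
  have "- m + x + m \<in> M \<longleftrightarrow> x \<in> M" for x
  proof
    assume "- m + x + m \<in> M"
    with M m have "m + (- m + x + m) + - m \<in> M" by (meson is_subgroup_add is_subgroup_minus)
    then show "x \<in> M" by (simp add: add.assoc)
  qed (use M m in \<open>meson is_subgroup_add is_subgroup_minus\<close>)
  then have "conjugate m M = M" by (simp only: set_eq_iff mem_conjugate_iff simp_thms)
  then show ?thesis by (simp add: conjugate_conjugate[symmetric])
qed

definition left_cosets :: "'g::group_add set \<Rightarrow> 'g set \<Rightarrow> 'g set set" where
  "left_cosets K H = (\<lambda>l. (\<lambda>m. l + m) ` H) ` K"

definition coset_rep :: "'g set \<Rightarrow> 'g" where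
  "coset_rep C = (SOME l. l \<in> C)"

lemma hyp_cosets_eq_left_cosets: "hyp_cosets K g = left_cosets K (K \<inter> conjugate g K)"
  by (simp add: hyp_cosets_def left_cosets_def conjugate_def)

lemma left_coset_mem_self: "is_subgroup H \<Longrightarrow> k \<in> (\<lambda>m. k + m) ` H"
  by (auto intro!: image_eqI[of _ _ 0] is_subgroup_0)

lemma left_coset_eq:
  assumes H: "is_subgroup H" and "C \<in> left_cosets K H" "c \<in> C"
  shows "C = (\<lambda>m. c + m) ` H"
proof -
  obtain l h where C: "C = (\<lambda>m. l + m) ` H" and h: "h \<in> H" "c = l + h"
    using assms(2,3) by (auto simp: left_cosets_def)
  have "(\<lambda>m. l + m) ` H = (\<lambda>m. l + h + m) ` H"
  proof (intro set_eqI iffI)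
    fix x assume "x \<in> (\<lambda>m. l + m) ` H"
    then obtain m where "m \<in> H" "x = l + h + (- h + m)" by (auto simp: add.assoc)
    then show "x \<in> (\<lambda>m. l + h + m) ` H" using H h by (blast intro: is_subgroup_add is_subgroup_minus)
  qed (use H h in \<open>auto simp: add.assoc intro: is_subgroup_add\<close>)
  then show ?thesis using C h by simp
qed

lemma coset_rep_mem: "is_subgroup H \<Longrightarrow> C \<in> left_cosets K H \<Longrightarrow> coset_rep C \<in> C"
  unfolding coset_rep_def left_cosets_def by (rule someI_ex) (auto dest: left_coset_mem_self)

lemma left_cosets_subset: "is_subgroup K \<Longrightarrow> H \<subseteq> K \<Longrightarrow> C \<in> left_cosets K H \<Longrightarrow> C \<subseteq> K"
  by (auto simp: left_cosets_def intro: is_subgroup_add)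

lemma coset_rep_in_subgroup:
  "is_subgroup K \<Longrightarrow> is_subgroup H \<Longrightarrow> H \<subseteq> K \<Longrightarrow> C \<in> left_cosets K H \<Longrightarrow> coset_rep C \<in> K"
  using coset_rep_mem left_cosets_subset by blast

lemma left_cosets_translate:
  assumes "is_subgroup K" "l \<in> K" "C \<in> left_cosets K H"
  shows "(\<lambda>m. l + m) ` C \<in> left_cosets K H"
proof -
  obtain k where "k \<in> K" "C = (\<lambda>m. k + m) ` H" using assms(3) by (auto simp: left_cosets_def)
  moreover from this have "(\<lambda>m. l + m) ` C = (\<lambda>m. (l + k) + m) ` H"
    by (auto simp: image_image add.assoc)
  ultimately show ?thesis using assms by (auto simp: left_cosets_def intro: is_subgroup_add)
qed

lemma bij_betw_left_cosets_translate:
  assumes "is_subgroup K" "l \<in> K"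
  shows "bij_betw (\<lambda>C. (\<lambda>m. l + m) ` C) (left_cosets K H) (left_cosets K H)"
proof (rule bij_betw_byWitness[where f' = "\<lambda>C. (\<lambda>m. - l + m) ` C"])
  show "(\<lambda>C. (+) l ` C) ` left_cosets K H \<subseteq> left_cosets K H"
    using left_cosets_translate[OF assms] by auto
  show "(\<lambda>C. (+) (- l) ` C) ` left_cosets K H \<subseteq> left_cosets K H"
    using left_cosets_translate[OF assms(1) is_subgroup_minus[OF assms]] by auto
qed (simp_all add: image_image add.assoc[symmetric])

lemma sum_left_cosets_translate:
  assumes K: "is_subgroup K" and H: "is_subgroup H" "H \<subseteq> K" and l: "l \<in> K"
    and inv: "\<And>c m. c \<in> K \<Longrightarrow> m \<in> H \<Longrightarrow> u (c + m) = u c"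
  shows "(\<Sum>C\<in>left_cosets K H. u (l + coset_rep C)) = (\<Sum>C\<in>left_cosets K H. u (coset_rep C))"
proof -
  have "u (l + coset_rep C) = u (coset_rep ((\<lambda>m. l + m) ` C))" if C: "C \<in> left_cosets K H" for C
  proof -
    let ?C' = "(\<lambda>m. l + m) ` C"
    have C': "?C' \<in> left_cosets K H" by (rule left_cosets_translate[OF K l C])
    have "l + coset_rep C \<in> ?C'" using coset_rep_mem[OF H(1) C] by blast
    then obtain m where "m \<in> H" "l + coset_rep C = coset_rep ?C' + m"
      using left_coset_eq[OF H(1) C' coset_rep_mem[OF H(1) C']] by auto
    then show ?thesis using inv coset_rep_in_subgroup[OF K H C'] by simp
  qed
  then have "(\<Sum>C\<in>left_cosets K H. u (l + coset_rep C))
      = (\<Sum>C\<in>left_cosets K H. u (coset_rep ((\<lambda>m. l + m) ` C)))"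
    by (rule sum.cong[OF refl])
  also have "\<dots> = (\<Sum>C\<in>left_cosets K H. u (coset_rep C))"
    by (rule sum.reindex_bij_betw[OF bij_betw_left_cosets_translate[OF K l]])
  finally show ?thesis .
qed

lemma open_left_translation:
  fixes H :: "'g::topological_group_add set"
  assumes "open H" shows "open ((\<lambda>m. l + m) ` H)"
proof -
  have "(\<lambda>m. l + m) ` H = (\<lambda>x. - l + x) -` H"
    by (force simp: image_iff add.assoc[symmetric])
  moreover have "continuous_on UNIV (\<lambda>x. - l + x)" by (intro continuous_intros)
  ultimately show ?thesis using open_vimage[OF assms] by simp
qed

lemma open_conjugate:
  fixes H :: "'g::topological_group_add set"
  assumes "open H" shows "open (conjugate g H)"
proof -
  have "conjugate g H = (\<lambda>x. - g + x + g) -` H" by (auto simp: mem_conjugate_iff)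
  moreover have "continuous_on UNIV (\<lambda>x. - g + x + g)" by (intro continuous_intros)
  ultimately show ?thesis using open_vimage[OF assms] by simp
qed

lemma finite_left_cosets:
  fixes H :: "'g::topological_group_add set"
  assumes K: "is_subgroup K" "compact K" and H: "is_subgroup H" "H \<subseteq> K" "open H"
  shows "finite (left_cosets K H)"
proof -
  have "K \<subseteq> \<Union>(left_cosets K H)"
    using left_coset_mem_self[OF H(1)] by (auto simp: left_cosets_def)
  moreover have "\<forall>C\<in>left_cosets K H. open C"
    using open_left_translation[OF H(3)] by (auto simp: left_cosets_def)
  ultimately obtain D where D: "D \<subseteq> left_cosets K H" "finite D" "K \<subseteq> \<Union>D"
    using compactE[OF K(2)] by metis
  have "C \<in> D" if C: "C \<in> left_cosets K H" for C
  proof -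
    have "coset_rep C \<in> K" by (rule coset_rep_in_subgroup[OF K(1) H(1,2) C])
    then obtain C' where C': "C' \<in> D" "coset_rep C \<in> C'" using D by auto
    have "C' = (\<lambda>m. coset_rep C + m) ` H"
      using left_coset_eq[OF H(1) _ C'(2)] C'(1) D(1) by blast
    also have "\<dots> = C"
      using left_coset_eq[OF H(1) C coset_rep_mem[OF H(1) C]] by simp
    finally show "C \<in> D" using C'(1) by simp
  qed
  then have "left_cosets K H \<subseteq> D" by blast
  then show ?thesis using D(2) by (rule finite_subset)
qed

lemma left_cosets_nonempty: "is_subgroup K \<Longrightarrow> left_cosets K H \<noteq> {}"
  unfolding left_cosets_def using is_subgroup_0 by blast

section \<open>States on function spaces\<close>

lemma is_state_add: "is_state C \<phi> \<Longrightarrow> f \<in> C \<Longrightarrow> h \<in> C \<Longrightarrow> \<phi> (\<lambda>x. f x + h x) = \<phi> f + \<phi> h"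
  and is_state_scale: "is_state C \<phi> \<Longrightarrow> f \<in> C \<Longrightarrow> \<phi> (\<lambda>x. c * f x) = c * \<phi> f"
  and is_state_nonneg: "is_state C \<phi> \<Longrightarrow> f \<in> C \<Longrightarrow> (\<And>x. 0 \<le> f x) \<Longrightarrow> 0 \<le> \<phi> f"
  and is_state_one: "is_state C \<phi> \<Longrightarrow> \<phi> (\<lambda>x. 1) = 1"
  by (simp_all add: is_state_def)

locale function_space =
  fixes C :: "('x \<Rightarrow> real) set"
  assumes add_mem: "f \<in> C \<Longrightarrow> h \<in> C \<Longrightarrow> (\<lambda>x. f x + h x) \<in> C"
    and scale_mem: "f \<in> C \<Longrightarrow> (\<lambda>x. c * f x) \<in> C"
    and const_mem: "(\<lambda>x. c) \<in> C"
begin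

lemma minus_mem: "f \<in> C \<Longrightarrow> (\<lambda>x. - f x) \<in> C"
  using scale_mem[of f "-1"] by simp

lemma diff_mem: "f \<in> C \<Longrightarrow> h \<in> C \<Longrightarrow> (\<lambda>x. f x - h x) \<in> C"
  using add_mem[of f "\<lambda>x. - h x"] minus_mem[of h] by simp

lemma sum_mem: "finite I \<Longrightarrow> (\<And>i. i \<in> I \<Longrightarrow> u i \<in> C) \<Longrightarrow> (\<lambda>x. \<Sum>i\<in>I. u i x) \<in> C"
  by (induction I rule: finite_induct) (use const_mem[of 0] in \<open>auto intro: add_mem\<close>)

lemma is_state_cong:
  assumes "\<And>h. h \<in> C \<Longrightarrow> \<Phi> h = \<Psi> h" and "is_state C \<Psi>"
  shows "is_state C \<Phi>"
  using assms add_mem scale_mem const_mem[of 1] unfolding is_state_def by simp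

lemma state_const: "is_state C \<phi> \<Longrightarrow> \<phi> (\<lambda>x. c) = c"
  using is_state_scale[of C \<phi> "\<lambda>x. 1" c] is_state_one[of C \<phi>] const_mem[of 1] by simp

lemma state_minus: "is_state C \<phi> \<Longrightarrow> f \<in> C \<Longrightarrow> \<phi> (\<lambda>x. - f x) = - \<phi> f"
  using is_state_scale[of C \<phi> f "-1"] by simp

lemma state_diff: "is_state C \<phi> \<Longrightarrow> f \<in> C \<Longrightarrow> h \<in> C \<Longrightarrow> \<phi> (\<lambda>x. f x - h x) = \<phi> f - \<phi> h"
  using is_state_add[of C \<phi> f "\<lambda>x. - h x"] state_minus[of \<phi> h] minus_mem[of h] by simp

lemma state_mono: "is_state C \<phi> \<Longrightarrow> f \<in> C \<Longrightarrow> h \<in> C \<Longrightarrow> (\<And>x. f x \<le> h x) \<Longrightarrow> \<phi> f \<le> \<phi> h"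
  using is_state_nonneg[of C \<phi> "\<lambda>x. h x - f x"] state_diff[of \<phi> h f] diff_mem[of h f] by simp

lemma state_abs_le:
  assumes "is_state C \<phi>" "f \<in> C" "b \<in> C" "\<And>x. \<bar>f x\<bar> \<le> b x"
  shows "\<bar>\<phi> f\<bar> \<le> \<phi> b"
proof -
  have "\<phi> f \<le> \<phi> b"
    by (rule state_mono[OF assms(1-3)]) (rule abs_le_D1[OF assms(4)])
  moreover have "\<phi> (\<lambda>x. - f x) \<le> \<phi> b"
    by (rule state_mono[OF assms(1) minus_mem[OF assms(2)] assms(3)]) (rule abs_le_D2[OF assms(4)])
  ultimately show ?thesis using state_minus[OF assms(1,2)] by linarith
qed

lemma state_sum:
  assumes "is_state C \<phi>" "finite I" "\<And>i. i \<in> I \<Longrightarrow> u i \<in> C"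
  shows "\<phi> (\<lambda>x. \<Sum>i\<in>I. u i x) = (\<Sum>i\<in>I. \<phi> (u i))"
  using assms(2,3)
proof (induction I rule: finite_induct)
  case empty
  then show ?case using state_const[OF assms(1), of 0] by simp
next
  case (insert i I)
  then show ?case
    using is_state_add[OF assms(1), of "u i" "\<lambda>x. \<Sum>i\<in>I. u i x"] sum_mem[of I u] by simp
qed

end

lemma is_state_convex_comb:
  assumes "finite S" "\<And>y. y \<in> S \<Longrightarrow> 0 \<le> w y" "(\<Sum>y\<in>S. w y) = 1"
    and "\<And>y. y \<in> S \<Longrightarrow> is_state C (\<Phi> y)"
  shows "is_state C (\<lambda>h. \<Sum>y\<in>S. w y * \<Phi> y h)"
  using assms unfolding is_state_def
  by (auto simp: distrib_left sum.distrib sum_distrib_left mult_ac intro!: sum_nonneg)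

locale function_algebra = function_space +
  assumes mult_mem: "f \<in> C \<Longrightarrow> h \<in> C \<Longrightarrow> (\<lambda>x. f x * h x) \<in> C"
    and comp_mem: "f \<in> C \<Longrightarrow> continuous_on UNIV \<theta> \<Longrightarrow> (\<lambda>x. \<theta> (f x)) \<in> C"
    and bounded_mem: "f \<in> C \<Longrightarrow> \<exists>B. \<forall>x. \<bar>f x\<bar> \<le> B"

section \<open>Approximating states by point masses\<close>

definition tent :: "real \<Rightarrow> int \<Rightarrow> real \<Rightarrow> real" where
  "tent d k t = max 0 (1 - \<bar>t / d - of_int k\<bar>)"

lemma continuous_on_tent: "continuous_on UNIV (tent d k)"
  unfolding tent_def divide_inverse by (intro continuous_intros)

lemma tent_nonneg: "0 \<le> tent d k t"
  by (simp add: tent_def)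

lemma tent_pos_imp_dist_less:
  assumes d: "d > 0" and pos: "tent d k t > 0"
  shows "\<bar>t - d * of_int k\<bar> < d"
proof -
  have "\<bar>t / d - of_int k\<bar> < 1" using pos unfolding tent_def by linarith
  moreover have "t / d - of_int k = (t - d * of_int k) / d" using d by (simp add: field_simps)
  ultimately show ?thesis using d by (simp add: abs_divide)
qed

lemma sum_tent_eq_1:
  assumes d: "d > 0" and t: "\<bar>t\<bar> \<le> real_of_int (N - 1) * d"
  shows "(\<Sum>k\<in>{-N..N}. tent d k t) = 1"
proof -
  define s where "s = t / d"
  define m where "m = \<lfloor>s\<rfloor>"
  have ms: "of_int m \<le> s" "s < of_int m + 1" unfolding m_def by linarith+
  have "\<bar>s\<bar> \<le> real_of_int (N - 1)"
    using t d by (simp add: s_def abs_divide divide_le_eq)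
  then have m_range: "m \<in> {-N..N}" "m + 1 \<in> {-N..N}" using ms by (auto simp: abs_le_iff)
  have "tent d k t = 0" if "k \<in> {-N..N} - {m, m + 1}" for k
  proof -
    have "k \<le> m - 1 \<or> k \<ge> m + 2" using that by auto
    then have "\<bar>s - of_int k\<bar> \<ge> 1" using ms by (auto simp: abs_if)
    then show ?thesis unfolding tent_def s_def[symmetric] by simp
  qed
  then have "(\<Sum>k\<in>{-N..N}. tent d k t) = (\<Sum>k\<in>{m, m + 1}. tent d k t)"
    by (intro sum.mono_neutral_right) (use m_range in auto)
  also have "\<dots> = (1 - (s - of_int m)) + (1 - (of_int m + 1 - s))"
    using ms unfolding tent_def s_def[symmetric] by (simp add: abs_if)
  finally show ?thesis by simp
qed

lemma sum_UN_weights: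
  fixes w :: "'i \<Rightarrow> 'y \<Rightarrow> real"
  assumes I: "finite I" and fin: "\<And>k. k \<in> I \<Longrightarrow> finite (S k)"
  shows "(\<Sum>y\<in>(\<Union>k\<in>I. S k). (\<Sum>k\<in>I. if y \<in> S k then w k y else 0) * h y)
    = (\<Sum>k\<in>I. \<Sum>y\<in>S k. w k y * h y)"
proof -
  let ?S = "\<Union>k\<in>I. S k"
  have "finite ?S" using I fin by auto
  have "(\<Sum>k\<in>I. if y \<in> S k then w k y else 0) * h y
      = (\<Sum>k\<in>I. if y \<in> S k then w k y * h y else 0)" for y
    by (auto simp: sum_distrib_right intro!: sum.cong)
  then have "(\<Sum>y\<in>?S. (\<Sum>k\<in>I. if y \<in> S k then w k y else 0) * h y)
      = (\<Sum>k\<in>I. \<Sum>y\<in>?S. if y \<in> S k then w k y * h y else 0)"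
    by (simp add: sum.swap[of _ _ I])
  also have "\<dots> = (\<Sum>k\<in>I. \<Sum>y\<in>?S \<inter> S k. w k y * h y)"
    by (simp add: sum.inter_restrict[OF \<open>finite ?S\<close>])
  also have "\<dots> = (\<Sum>k\<in>I. \<Sum>y\<in>S k. w k y * h y)"
    by (intro sum.cong refl) (auto intro: arg_cong[where f = "\<lambda>A. sum _ A"])
  finally show ?thesis .
qed

lemma abs_sum_diff_le:
  fixes a b c :: "'i \<Rightarrow> real"
  assumes "\<And>k. k \<in> I \<Longrightarrow> \<bar>a k - b k\<bar> \<le> c k"
  shows "\<bar>(\<Sum>k\<in>I. a k) - (\<Sum>k\<in>I. b k)\<bar> \<le> (\<Sum>k\<in>I. c k)"
  using order.trans[OF sum_abs[of "\<lambda>k. a k - b k" I] sum_mono[OF assms]] by (simp add: sum_subtractf)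

text \<open>\<open>(S, w)\<close> is a finitely supported measure on \<open>{p > 0}\<close> which integrates the functions
  of \<open>F\<close> like the measure \<open>f \<mapsto> \<psi> (f p)\<close>, up to \<open>\<epsilon>\<close> times the total mass.\<close>
definition discrete_approx ::
    "(('x \<Rightarrow> real) \<Rightarrow> real) \<Rightarrow> ('x \<Rightarrow> real) \<Rightarrow> ('x \<Rightarrow> real) set \<Rightarrow> real \<Rightarrow> 'x set \<Rightarrow> ('x \<Rightarrow> real) \<Rightarrow> bool"
  where "discrete_approx \<psi> p F \<epsilon> S w \<longleftrightarrow> finite S \<and> (\<forall>y\<in>S. 0 \<le> w y \<and> 0 < p y) \<and>
     (\<Sum>y\<in>S. w y) = \<psi> p \<and> (\<forall>f\<in>F. \<bar>\<psi> (\<lambda>x. f x * p x) - (\<Sum>y\<in>S. w y * f y)\<bar> \<le> \<epsilon> * \<psi> p)"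

lemma (in function_space) discrete_approx_empty:
  assumes st: "is_state C \<psi>" and p: "p \<in> C" "\<And>x. 0 \<le> p x"
  shows "\<exists>S w. discrete_approx \<psi> p {} \<epsilon> S w"
proof (cases "\<exists>y. 0 < p y")
  case True
  then obtain y where "0 < p y" by blast
  moreover have "0 \<le> \<psi> p" using is_state_nonneg[OF st p] .
  ultimately show ?thesis unfolding discrete_approx_def
    by (intro exI[of _ "{y}"] exI[of _ "\<lambda>_. \<psi> p"]) auto
next
  case False
  then have "p = (\<lambda>x. 0)" using p(2) by (auto intro!: ext simp: not_less order.antisym)
  then show ?thesis unfolding discrete_approx_def using state_const[OF st, of 0]
    by (intro exI[of _ "{}"]) auto
qed

text \<open>If \<open>g\<close> stays within \<open>d\<close> of \<open>c\<close> on the support of \<open>p\<close>, both \<open>\<psi> (g p)\<close> and the discrete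
  integral of \<open>g\<close> are within \<open>d \<psi>(p)\<close> of \<open>c \<psi>(p)\<close>.\<close>
lemma (in function_algebra) discrete_approx_insert:
  assumes st: "is_state C \<psi>" and p: "p \<in> C" "\<And>x. 0 \<le> p x" and g: "g \<in> C"
    and near: "\<And>x. 0 < p x \<Longrightarrow> \<bar>g x - c\<bar> < d" and d: "2 * d \<le> \<epsilon>"
    and approx: "discrete_approx \<psi> p F \<epsilon> S w"
  shows "discrete_approx \<psi> p (insert g F) \<epsilon> S w"
proof -
  have S: "finite S" "\<And>y. y \<in> S \<Longrightarrow> 0 \<le> w y \<and> 0 < p y" "(\<Sum>y\<in>S. w y) = \<psi> p"
    using approx by (auto simp: discrete_approx_def)
  have bound: "\<bar>(g x - c) * p x\<bar> \<le> d * p x" for x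
    using near[of x] p(2)[of x] by (cases "p x = 0") (auto simp: abs_mult mult_right_mono)
  have "\<psi> (\<lambda>x. g x * p x) - c * \<psi> p = \<psi> (\<lambda>x. (g x - c) * p x)"
    using state_diff[OF st mult_mem[OF g p(1)] scale_mem[OF p(1)], of c]
      is_state_scale[OF st p(1), of c] by (simp add: algebra_simps)
  also have "\<bar>\<dots>\<bar> \<le> d * \<psi> p"
    using state_abs_le[OF st mult_mem[OF diff_mem[OF g const_mem] p(1)] scale_mem[OF p(1)] bound]
      is_state_scale[OF st p(1)] by simp
  finally have integral: "\<bar>\<psi> (\<lambda>x. g x * p x) - c * \<psi> p\<bar> \<le> d * \<psi> p" .
  have "\<bar>(\<Sum>y\<in>S. w y * g y) - c * \<psi> p\<bar> = \<bar>\<Sum>y\<in>S. w y * (g y - c)\<bar>"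
    by (simp add: S(3)[symmetric] sum_distrib_left sum_subtractf algebra_simps)
  also have "\<dots> \<le> (\<Sum>y\<in>S. w y * d)"
  proof (intro order.trans[OF sum_abs] sum_mono)
    fix y assume "y \<in> S"
    then have "0 \<le> w y" "\<bar>g y - c\<bar> \<le> d" using S(2) near less_imp_le by blast+
    then show "\<bar>w y * (g y - c)\<bar> \<le> w y * d" by (simp add: abs_mult mult_left_mono)
  qed
  also have "\<dots> = d * \<psi> p" by (simp add: S(3)[symmetric] sum_distrib_left mult.commute)
  finally have sum: "\<bar>(\<Sum>y\<in>S. w y * g y) - c * \<psi> p\<bar> \<le> d * \<psi> p" .
  have "0 \<le> \<psi> p" using is_state_nonneg[OF st p] .
  then have "2 * d * \<psi> p \<le> \<epsilon> * \<psi> p" using d by (rule mult_right_mono[rotated])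
  then have "\<bar>\<psi> (\<lambda>x. g x * p x) - (\<Sum>y\<in>S. w y * g y)\<bar> \<le> \<epsilon> * \<psi> p"
    using integral sum by linarith
  then show ?thesis using approx by (simp add: discrete_approx_def)
qed

lemma (in function_algebra) discrete_approx_sum:
  assumes st: "is_state C \<psi>" and I: "finite I" and F: "F \<subseteq> C"
    and q: "\<And>k. k \<in> I \<Longrightarrow> q k \<in> C" "\<And>k x. k \<in> I \<Longrightarrow> 0 \<le> q k x"
    and p: "\<And>x. p x = (\<Sum>k\<in>I. q k x)"
    and approx: "\<And>k. k \<in> I \<Longrightarrow> discrete_approx \<psi> (q k) F \<epsilon> (S k) (w k)"
  shows "discrete_approx \<psi> p F \<epsilon> (\<Union>k\<in>I. S k) (\<lambda>y. \<Sum>k\<in>I. if y \<in> S k then w k y else 0)"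
proof -
  have S: "\<And>k. k \<in> I \<Longrightarrow> finite (S k)"
    "\<And>k y. k \<in> I \<Longrightarrow> y \<in> S k \<Longrightarrow> 0 \<le> w k y \<and> 0 < q k y"
    "\<And>k. k \<in> I \<Longrightarrow> (\<Sum>y\<in>S k. w k y) = \<psi> (q k)"
    "\<And>k f. k \<in> I \<Longrightarrow> f \<in> F \<Longrightarrow>
       \<bar>\<psi> (\<lambda>x. f x * q k x) - (\<Sum>y\<in>S k. w k y * f y)\<bar> \<le> \<epsilon> * \<psi> (q k)"
    using approx by (auto simp: discrete_approx_def)
  have split: "\<psi> (\<lambda>x. f x * p x) = (\<Sum>k\<in>I. \<psi> (\<lambda>x. f x * q k x))" if "f \<in> C" for f
    using state_sum[OF st I, of "\<lambda>k x. f x * q k x"] mult_mem[OF that q(1)]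
    by (simp add: p sum_distrib_left)
  have mass: "\<psi> p = (\<Sum>k\<in>I. \<psi> (q k))"
    using split[OF const_mem[of 1]] by simp
  have pos: "0 < p y" if "k \<in> I" "y \<in> S k" for k y
  proof -
    have "q k y \<le> p y" unfolding p using I that(1) q(2) by (intro member_le_sum) auto
    then show ?thesis using S(2)[OF that] by linarith
  qed
  let ?T = "\<Union>k\<in>I. S k" and ?v = "\<lambda>y. \<Sum>k\<in>I. if y \<in> S k then w k y else 0"
  show ?thesis unfolding discrete_approx_def
  proof (intro conjI ballI)
    show "finite ?T" using I S(1) by blast
  next
    fix y assume "y \<in> ?T"
    then show "0 \<le> ?v y" "0 < p y" using S(2) pos by (auto intro!: sum_nonneg)
  next
    show "(\<Sum>y\<in>?T. ?v y) = \<psi> p"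
      using sum_UN_weights[OF I S(1), where w = w and h = "\<lambda>_. 1"] S(3) by (simp add: mass)
  next
    fix f assume f: "f \<in> F"
    have "\<bar>\<psi> (\<lambda>x. f x * p x) - (\<Sum>y\<in>?T. ?v y * f y)\<bar>
        = \<bar>(\<Sum>k\<in>I. \<psi> (\<lambda>x. f x * q k x)) - (\<Sum>k\<in>I. \<Sum>y\<in>S k. w k y * f y)\<bar>"
      using split f F sum_UN_weights[OF I S(1), where w = w and h = f] by auto
    also have "\<dots> \<le> \<epsilon> * \<psi> p"
      unfolding mass sum_distrib_left by (rule abs_sum_diff_le) (rule S(4)[OF _ f])
    finally show "\<bar>\<psi> (\<lambda>x. f x * p x) - (\<Sum>y\<in>?T. ?v y * f y)\<bar> \<le> \<epsilon> * \<psi> p" .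
  qed
qed

text \<open>Induction on \<open>F\<close>: to add a function \<open>g\<close>, cut \<open>p\<close> along a partition of unity by tents in \<open>g\<close>
  of width \<open>\<epsilon>/2\<close>, on whose pieces \<open>g\<close> is almost constant.\<close>
lemma (in function_algebra) discrete_approx_exists:
  assumes st: "is_state C \<psi>" and e: "\<epsilon> > 0" and F: "finite F" "F \<subseteq> C"
    and p: "p \<in> C" "\<And>x. 0 \<le> p x"
  shows "\<exists>S w. discrete_approx \<psi> p F \<epsilon> S w"
  using F p
proof (induction F arbitrary: p rule: finite_induct)
  case empty
  then show ?case using discrete_approx_empty[OF st] by blast
next
  case (insert g F)
  have g: "g \<in> C" and F: "F \<subseteq> C" using insert.prems by auto
  obtain B where B: "\<And>x. \<bar>g x\<bar> \<le> B" using bounded_mem[OF g] by blast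
  define d where "d = \<epsilon> / 2"
  have d: "d > 0" using e by (simp add: d_def)
  define N :: int where "N = \<lceil>B / d\<rceil> + 1"
  have "B / d \<le> real_of_int (N - 1)" by (simp add: N_def)
  then have "B \<le> real_of_int (N - 1) * d" using d by (simp add: divide_le_eq)
  then have g_range: "\<bar>g x\<bar> \<le> real_of_int (N - 1) * d" for x using B[of x] by linarith
  define q where "q k x = p x * tent d k (g x)" for k x
  have q: "q k \<in> C" "0 \<le> q k x" for k x
    using insert.prems(3) tent_nonneg[of d k "g x"] unfolding q_def
    by (auto intro!: mult_mem[OF insert.prems(2)] comp_mem[OF g continuous_on_tent])
  have "\<forall>k. \<exists>S w. discrete_approx \<psi> (q k) F \<epsilon> S w" using insert.IH[OF F q] by blast
  then obtain S w where approx: "\<And>k. discrete_approx \<psi> (q k) F \<epsilon> (S k) (w k)" by metis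
  have near: "\<bar>g x - d * of_int k\<bar> < d" if "0 < q k x" for k x
    using that insert.prems(3)[of x] tent_nonneg[of d k "g x"] unfolding q_def
    by (intro tent_pos_imp_dist_less[OF d]) (auto simp: zero_less_mult_iff)
  have approx': "discrete_approx \<psi> (q k) (insert g F) \<epsilon> (S k) (w k)" for k
    by (rule discrete_approx_insert[OF st q g near _ approx]) (simp_all add: d_def)
  have "p x = (\<Sum>k\<in>{-N..N}. q k x)" for x
    by (simp add: q_def sum_distrib_left[symmetric] sum_tent_eq_1[OF d g_range])
  from discrete_approx_sum[OF st _ _ q this approx'] g F show ?case by blast
qed

lemma (in function_algebra) state_approx_by_point_masses:
  assumes st: "is_state C \<psi>" and e: "\<epsilon> > 0" and F: "finite F" "F \<subseteq> C"
  shows "\<exists>S w. finite S \<and> (\<forall>y\<in>S. 0 \<le> w y) \<and> (\<Sum>y\<in>S. w y) = 1 \<and>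
    (\<forall>f\<in>F. \<bar>\<psi> f - (\<Sum>y\<in>S. w y * f y)\<bar> \<le> \<epsilon>)"
proof -
  obtain S w where "discrete_approx \<psi> (\<lambda>x. 1) F \<epsilon> S w"
    using discrete_approx_exists[OF st e F const_mem, of 1] by auto
  then show ?thesis unfolding discrete_approx_def is_state_one[OF st] by auto
qed

section \<open>Compactness of the bounded functionals\<close>

definition sup_abs :: "('a \<Rightarrow> real) \<Rightarrow> real" where
  "sup_abs h = (SUP y. \<bar>h y\<bar>)"

lemma (in function_algebra) abs_le_sup_abs:
  assumes "h \<in> C" shows "\<bar>h y\<bar> \<le> sup_abs h"
proof -
  obtain B where "\<And>x. \<bar>h x\<bar> \<le> B" using bounded_mem[OF assms] by blast
  then show ?thesis unfolding sup_abs_def by (intro cSUP_upper bdd_aboveI2) auto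
qed

definition bounded_functionals :: "('a \<Rightarrow> real) set \<Rightarrow> (('a \<Rightarrow> real) \<Rightarrow> real) set" where
  "bounded_functionals C = PiE UNIV (\<lambda>h. if h \<in> C then {- sup_abs h .. sup_abs h} else {0})"

text \<open>Tychonoff: the functionals are topologized pointwise.\<close>
lemma compact_bounded_functionals: "compact (bounded_functionals C)"
proof -
  have "compactin (product_topology (\<lambda>_. euclidean) UNIV) (bounded_functionals C)"
    unfolding bounded_functionals_def compactin_PiE by (simp add: compactin_euclidean_iff)
  then show ?thesis by (simp add: euclidean_product_topology)
qed

lemma mem_bounded_functionals_iff:
  "\<Phi> \<in> bounded_functionals C \<longleftrightarrow> (\<forall>h. (h \<in> C \<longrightarrow> \<bar>\<Phi> h\<bar> \<le> sup_abs h) \<and> (h \<notin> C \<longrightarrow> \<Phi> h = 0))"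
  unfolding bounded_functionals_def PiE_UNIV_domain Pi_iff by (auto simp: abs_le_iff)

lemma continuous_on_evaluation: "continuous_on UNIV (\<lambda>\<Phi>::('a \<Rightarrow> real) \<Rightarrow> real. \<Phi> f)"
  by (rule continuous_on_product_coordinates)

lemma closed_imp_closed_Collect_imp: "closed {x. Q x} \<Longrightarrow> closed {x. P \<longrightarrow> Q x}"
  by (cases P) auto

lemma closed_states: "closed {\<Phi> :: ('a \<Rightarrow> real) \<Rightarrow> real. is_state C \<Phi>}"
  unfolding is_state_def Ball_def
  by (intro closed_Collect_conj closed_Collect_all closed_imp_closed_Collect_imp closed_Collect_eq
      closed_Collect_le continuous_on_evaluation continuous_intros)

section \<open>The hypergroup action on \<open>C(X)\<^sup>K\<close>\<close>

lemma CKX_subset_CX: "CKX act K \<subseteq> CX"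
  by (auto simp: CKX_def CX_def)

lemma function_algebra_CKX:
  assumes X: "compact (UNIV :: 'x set)"
  shows "function_algebra (CKX act K :: ('x::topological_space \<Rightarrow> real) set)"
proof
  fix f :: "'x \<Rightarrow> real" and \<theta> :: "real \<Rightarrow> real"
  assume f: "f \<in> CKX act K"
  then have "compact (range f)" using X by (auto simp: CKX_def intro: compact_continuous_image)
  then show "\<exists>B. \<forall>x. \<bar>f x\<bar> \<le> B" by (auto dest!: compact_imp_bounded simp: bounded_real)
  assume "continuous_on UNIV \<theta>"
  then show "(\<lambda>x. \<theta> (f x)) \<in> CKX act K"
    using f by (auto simp: CKX_def intro: continuous_on_compose2[of UNIV \<theta> UNIV f])
qed (auto simp: CKX_def intro: continuous_intros)

locale compact_open_subgroup_action =
  fixes act :: "'g::topological_group_add \<Rightarrow> 'x::topological_space \<Rightarrow> 'x" and K :: "'g set"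
  assumes subgroup: "is_subgroup K" and compact_subgroup: "compact K" and open_subgroup: "open K"
    and compact_space: "compact (UNIV :: 'x set)" and action: "continuous_action act"
begin

sublocale CKX: function_algebra "CKX act K"
  by (rule function_algebra_CKX[OF compact_space])

lemma CX_eq_CKX_empty: "CX = CKX act {}"
  by (simp add: CX_def CKX_def)

sublocale CX: function_algebra "CX :: ('x \<Rightarrow> real) set"
  unfolding CX_eq_CKX_empty by (rule function_algebra_CKX[OF compact_space])

lemma act_add: "act (g + h) x = act g (act h x)"
  using action by (simp add: continuous_action_def)

lemma continuous_on_act: "continuous_on UNIV (act g)"
proof -
  have "continuous_on UNIV (\<lambda>p. act (fst p) (snd p))"
    using action by (simp add: continuous_action_def)
  from continuous_on_compose2[OF this, of UNIV "\<lambda>y. (g, y)"] show ?thesis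
    by (simp add: continuous_on_Pair)
qed

lemma CX_comp_act: "f \<in> CX \<Longrightarrow> (\<lambda>y. f (act g y)) \<in> CX"
  unfolding CX_def using continuous_on_compose2[OF _ continuous_on_act, of UNIV f g] by simp

lemma CKX_invariant: "f \<in> CKX act K \<Longrightarrow> k \<in> K \<Longrightarrow> f (act k x) = f x"
  by (simp add: CKX_def)

lemma CKX_conjugate_invariant:
  assumes f: "f \<in> CKX act K" and m: "m \<in> conjugate g K"
  shows "f (act (- g) (act m y)) = f (act (- g) y)"
proof -
  have "act (- g) (act m y) = act (- g + m + g) (act (- g) y)"
    by (simp only: act_add[symmetric] add.assoc right_minus add_0_right)
  then show ?thesis using CKX_invariant[OF f] m by (simp add: mem_conjugate_iff)
qed

lemma is_subgroup_stabilizer: "is_subgroup (K \<inter> conjugate g K)"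
  by (simp add: is_subgroup_Int subgroup is_subgroup_conjugate)

lemma finite_hyp_cosets: "finite (hyp_cosets K g)"
  unfolding hyp_cosets_eq_left_cosets
  by (rule finite_left_cosets[OF subgroup compact_subgroup is_subgroup_stabilizer])
    (auto intro: open_Int open_subgroup open_conjugate)

lemma card_hyp_cosets_pos: "card (hyp_cosets K g) > 0"
  using finite_hyp_cosets left_cosets_nonempty[OF subgroup]
  by (simp add: hyp_cosets_eq_left_cosets card_gt_0_iff)

lemma hyp_act_eq: "hyp_act act K g f = (\<lambda>x. (1 / real (card (hyp_cosets K g))) *
    (\<Sum>C\<in>hyp_cosets K g. f (act (- g) (act (- coset_rep C) x))))"
  by (simp add: hyp_act_def coset_rep_def)

lemma hyp_act_mem_CKX:
  assumes f: "f \<in> CKX act K"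
  shows "hyp_act act K g f \<in> CKX act K"
proof -
  have "continuous_on UNIV (\<lambda>x. f (act (- g) (act (- coset_rep C) x)))" for C
    using f by (auto simp: CKX_def intro!: continuous_on_compose2[OF _ continuous_on_act]
        continuous_on_compose2[of UNIV f])
  then have "continuous_on UNIV (hyp_act act K g f)"
    unfolding hyp_act_eq by (intro continuous_intros)
  moreover have "hyp_act act K g f (act k x) = hyp_act act K g f x" if k: "k \<in> K" for k x
  proof -
    define u where "u l = f (act (- g) (act (- l) x))" for l
    have "u (c + m) = u c" if "m \<in> K \<inter> conjugate g K" for c m
    proof -
      have "- m \<in> conjugate g K"
        using that is_subgroup_minus[OF is_subgroup_conjugate[OF subgroup]] by blast
      then show ?thesis
        unfolding u_def minus_add act_add by (rule CKX_conjugate_invariant[OF f])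
    qed
    then have "(\<Sum>C\<in>hyp_cosets K g. u (- k + coset_rep C)) = (\<Sum>C\<in>hyp_cosets K g. u (coset_rep C))"
      unfolding hyp_cosets_eq_left_cosets
      by (intro sum_left_cosets_translate[OF subgroup is_subgroup_stabilizer])
        (auto intro: is_subgroup_minus[OF subgroup k])
    then show ?thesis unfolding hyp_act_eq u_def by (simp add: minus_add act_add)
  qed
  ultimately show ?thesis by (simp add: CKX_def)
qed

lemma state_hyp_act:
  assumes st: "is_state CX \<Phi>" and f: "f \<in> CKX act K"
    and inv: "\<And>l. l \<in> K \<Longrightarrow> \<Phi> (\<lambda>y. f (act (- g) (act l y))) = \<Phi> (\<lambda>y. f (act (- g) y))"
  shows "\<Phi> (hyp_act act K g f) = \<Phi> (\<lambda>y. f (act (- g) y))"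
proof -
  let ?H = "hyp_cosets K g"
  have fX: "(\<lambda>x. f (act (- g) (act l x))) \<in> CX" for l
    using CX_comp_act[OF CX_comp_act, of f] f CKX_subset_CX by blast
  have "\<Phi> (hyp_act act K g f)
      = (1 / real (card ?H)) * (\<Sum>C\<in>?H. \<Phi> (\<lambda>x. f (act (- g) (act (- coset_rep C) x))))"
    unfolding hyp_act_eq is_state_scale[OF st CX.sum_mem[OF finite_hyp_cosets fX]]
    by (simp only: CX.state_sum[OF st finite_hyp_cosets fX])
  also have "\<dots> = (1 / real (card ?H)) * (\<Sum>C\<in>?H. \<Phi> (\<lambda>y. f (act (- g) y)))"
    using inv coset_rep_in_subgroup[OF subgroup is_subgroup_stabilizer]
    by (simp add: hyp_cosets_eq_left_cosets is_subgroup_minus[OF subgroup])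
  finally show ?thesis using card_hyp_cosets_pos[of g] by simp
qed

section \<open>Lifting states from \<open>C(X)\<^sup>K\<close> to \<open>C(X)\<close>\<close>

definition common_stabilizer :: "'g set \<Rightarrow> 'g set" where
  "common_stabilizer Gs = K \<inter> (\<Inter>g\<in>Gs. conjugate g K)"

definition normal_core :: "'g set \<Rightarrow> 'g set" where
  "normal_core Gs = (\<Inter>k\<in>K. conjugate k (common_stabilizer Gs))"

lemma is_subgroup_common_stabilizer: "is_subgroup (common_stabilizer Gs)"
  unfolding common_stabilizer_def
  by (intro is_subgroup_Int[OF subgroup] is_subgroup_Inter) (auto intro: is_subgroup_conjugate subgroup)

lemma open_common_stabilizer: "finite Gs \<Longrightarrow> open (common_stabilizer Gs)"
  unfolding common_stabilizer_def
  by (intro open_Int open_subgroup open_INT) (auto intro: open_conjugate open_subgroup)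

lemma common_stabilizer_subset:
  "common_stabilizer Gs \<subseteq> K" "g \<in> Gs \<Longrightarrow> common_stabilizer Gs \<subseteq> conjugate g K"
  by (auto simp: common_stabilizer_def)

lemma normal_core_subset: "normal_core Gs \<subseteq> common_stabilizer Gs"
  unfolding normal_core_def using is_subgroup_0[OF subgroup] conjugate_0 by blast

lemma normal_core_subset_subgroup: "normal_core Gs \<subseteq> K"
  using normal_core_subset common_stabilizer_subset(1) by blast

lemma is_subgroup_normal_core: "is_subgroup (normal_core Gs)"
  unfolding normal_core_def
  by (rule is_subgroup_Inter) (auto intro: is_subgroup_conjugate is_subgroup_common_stabilizer)

lemma normal_core_normal:
  assumes k: "k \<in> K" and n: "n \<in> normal_core Gs"
  shows "k + n + - k \<in> normal_core Gs"
  unfolding normal_core_def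
proof (rule INT_I)
  fix k' assume "k' \<in> K"
  then have "- k + k' \<in> K" using k subgroup by (meson is_subgroup_add is_subgroup_minus)
  then have "n \<in> conjugate (- k + k') (common_stabilizer Gs)"
    using n unfolding normal_core_def by blast
  then have "k + n + - k \<in> conjugate k (conjugate (- k + k') (common_stabilizer Gs))"
    by (simp add: mem_conjugate_iff add.assoc)
  then show "k + n + - k \<in> conjugate k' (common_stabilizer Gs)"
    by (simp add: conjugate_conjugate add.assoc[symmetric])
qed

text \<open>Conjugation by \<open>k\<close> only depends on the coset of \<open>k\<close> modulo the open subgroup, so the
  intersection defining the normal core is finite.\<close>
lemma open_normal_core:
  assumes Gs: "finite Gs" shows "open (normal_core Gs)"
proof -
  let ?M = "common_stabilizer Gs"
  have "(\<lambda>k. conjugate k ?M) ` K \<subseteq> (\<lambda>C. conjugate (coset_rep C) ?M) ` left_cosets K ?M"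
  proof
    fix X assume "X \<in> (\<lambda>k. conjugate k ?M) ` K"
    then obtain k where k: "k \<in> K" "X = conjugate k ?M" by auto
    let ?C = "(\<lambda>m. k + m) ` ?M"
    have C: "?C \<in> left_cosets K ?M" using k(1) by (auto simp: left_cosets_def)
    then obtain m where "m \<in> ?M" "coset_rep ?C = k + m"
      using coset_rep_mem[OF is_subgroup_common_stabilizer] by blast
    then have "conjugate (coset_rep ?C) ?M = X"
      using conjugate_subgroup_absorb[OF is_subgroup_common_stabilizer] k by simp
    then show "X \<in> (\<lambda>C. conjugate (coset_rep C) ?M) ` left_cosets K ?M" using C by blast
  qed
  moreover have "finite (left_cosets K ?M)"
    by (rule finite_left_cosets[OF subgroup compact_subgroup is_subgroup_common_stabilizer
          common_stabilizer_subset(1) open_common_stabilizer[OF Gs]])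
  ultimately have "finite ((\<lambda>k. conjugate k ?M) ` K)" by (meson finite_surj)
  then show ?thesis unfolding normal_core_def
    by (rule open_Inter) (auto intro: open_conjugate open_common_stabilizer[OF Gs])
qed

lemma finite_core_cosets: "finite Gs \<Longrightarrow> finite (left_cosets K (normal_core Gs))"
  by (rule finite_left_cosets[OF subgroup compact_subgroup is_subgroup_normal_core
        normal_core_subset_subgroup open_normal_core])

lemma card_core_cosets_pos: "finite Gs \<Longrightarrow> card (left_cosets K (normal_core Gs)) > 0"
  using finite_core_cosets left_cosets_nonempty[OF subgroup] by (simp add: card_gt_0_iff)

text \<open>A discrete substitute for the Haar average \<open>h \<mapsto> \<integral>\<^sub>K h (k x) dk\<close>, exact on functions
  invariant under the normal core.\<close>
definition coset_average :: "'g set \<Rightarrow> 'x \<Rightarrow> ('x \<Rightarrow> real) \<Rightarrow> real" where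
  "coset_average Gs x h = (1 / real (card (left_cosets K (normal_core Gs)))) *
     (\<Sum>D\<in>left_cosets K (normal_core Gs). h (act (coset_rep D) x))"

lemma is_state_coset_average: "finite Gs \<Longrightarrow> is_state C (coset_average Gs x)"
  unfolding is_state_def coset_average_def using card_core_cosets_pos
  by (auto simp: sum.distrib distrib_left sum_distrib_left mult_ac intro!: sum_nonneg)

lemma coset_average_abs_le:
  assumes Gs: "finite Gs" and B: "\<And>y. \<bar>h y\<bar> \<le> B"
  shows "\<bar>coset_average Gs x h\<bar> \<le> B"
proof -
  let ?L = "left_cosets K (normal_core Gs)"
  have "\<bar>\<Sum>D\<in>?L. h (act (coset_rep D) x)\<bar> \<le> real (card ?L) * B"
    using order.trans[OF sum_abs sum_mono[of ?L _ "\<lambda>_. B"]] B by simp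
  then show ?thesis unfolding coset_average_def using card_core_cosets_pos[OF Gs]
    by (simp add: abs_mult divide_le_eq mult.commute)
qed

lemma coset_average_CKX: "finite Gs \<Longrightarrow> a \<in> CKX act K \<Longrightarrow> coset_average Gs x a = a x"
  unfolding coset_average_def using card_core_cosets_pos
  by (simp add: CKX_invariant coset_rep_in_subgroup[OF subgroup is_subgroup_normal_core
        normal_core_subset_subgroup])

lemma coset_average_translate:
  assumes l: "l \<in> K" and inv: "\<And>n z. n \<in> normal_core Gs \<Longrightarrow> h (act n z) = h z"
  shows "coset_average Gs x (\<lambda>y. h (act l y)) = coset_average Gs x h"
proof -
  have "h (act (c + n) x) = h (act c x)" if "c \<in> K" "n \<in> normal_core Gs" for c n
  proof -
    have "act (c + n) x = act (c + n + - c) (act c x)"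
      by (simp only: act_add[symmetric] add.assoc add.left_inverse add_0_right)
    then show ?thesis using inv[OF normal_core_normal[OF that]] by simp
  qed
  then show ?thesis unfolding coset_average_def act_add[symmetric]
    using sum_left_cosets_translate[OF subgroup is_subgroup_normal_core normal_core_subset_subgroup l,
        where u = "\<lambda>c. h (act c x)"] by simp
qed

definition invariant_on_translates :: "'g set \<Rightarrow> (('x \<Rightarrow> real) \<Rightarrow> real) \<Rightarrow> bool" where
  "invariant_on_translates Gs \<Phi> \<longleftrightarrow> (\<forall>f\<in>CKX act K. \<forall>g\<in>Gs. \<forall>l\<in>K.
     \<Phi> (\<lambda>y. f (act (- g) (act l y))) = \<Phi> (\<lambda>y. f (act (- g) y)))"

lemma invariant_on_translates_coset_average:
  "invariant_on_translates Gs (coset_average Gs x)"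
  unfolding invariant_on_translates_def
proof (intro ballI)
  fix f g l assume "f \<in> CKX act K" "g \<in> Gs" "l \<in> K"
  then show "coset_average Gs x (\<lambda>y. f (act (- g) (act l y))) = coset_average Gs x (\<lambda>y. f (act (- g) y))"
    using CKX_conjugate_invariant normal_core_subset common_stabilizer_subset(2)
    by (intro coset_average_translate) blast+
qed

lemma approximate_lift:
  assumes st: "is_state (CKX act K) \<phi>" and A: "finite A" "A \<subseteq> CKX act K" and Gs: "finite Gs"
    and e: "\<epsilon> > 0"
  shows "\<exists>\<Phi>\<in>bounded_functionals CX. is_state CX \<Phi> \<and> (\<forall>a\<in>A. \<bar>\<Phi> a - \<phi> a\<bar> \<le> \<epsilon>) \<and>
    invariant_on_translates Gs \<Phi>"
proof -
  obtain S w where S: "finite S" "\<And>y. y \<in> S \<Longrightarrow> 0 \<le> w y" "(\<Sum>y\<in>S. w y) = 1"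
    "\<And>a. a \<in> A \<Longrightarrow> \<bar>\<phi> a - (\<Sum>y\<in>S. w y * a y)\<bar> \<le> \<epsilon>"
    using CKX.state_approx_by_point_masses[OF st e A] by blast
  define \<Psi> where "\<Psi> h = (\<Sum>y\<in>S. w y * coset_average Gs y h)" for h
  define \<Phi> where "\<Phi> h = (if h \<in> CX then \<Psi> h else 0)" for h
  have "is_state CX \<Psi>"
    unfolding \<Psi>_def using S(1-3) is_state_coset_average[OF Gs] by (rule is_state_convex_comb)
  then have "is_state CX \<Phi>" by (rule CX.is_state_cong[rotated]) (simp add: \<Phi>_def)
  moreover have "\<Phi> \<in> bounded_functionals CX"
    unfolding mem_bounded_functionals_iff
  proof (intro allI conjI impI)
    fix h :: "'x \<Rightarrow> real" assume h: "h \<in> CX"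
    have "\<bar>\<Psi> h\<bar> \<le> (\<Sum>y\<in>S. w y * sup_abs h)"
      unfolding \<Psi>_def using S(2) coset_average_abs_le[OF Gs CX.abs_le_sup_abs[OF h]]
      by (intro order.trans[OF sum_abs] sum_mono) (simp add: abs_mult mult_left_mono)
    then show "\<bar>\<Phi> h\<bar> \<le> sup_abs h" using h S(3) by (simp add: \<Phi>_def sum_distrib_right[symmetric])
  qed (simp add: \<Phi>_def)
  moreover have "\<bar>\<Phi> a - \<phi> a\<bar> \<le> \<epsilon>" if a: "a \<in> A" for a
  proof -
    have "a \<in> CKX act K" "a \<in> CX" using a A(2) CKX_subset_CX by auto
    then have "\<Phi> a = (\<Sum>y\<in>S. w y * a y)" by (simp add: \<Phi>_def \<Psi>_def coset_average_CKX[OF Gs])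
    then show ?thesis using S(4)[OF a] by (simp add: abs_minus_commute)
  qed
  moreover have "invariant_on_translates Gs \<Phi>"
    unfolding invariant_on_translates_def
  proof (intro ballI)
    fix f g l assume f: "f \<in> CKX act K" and "g \<in> Gs" "l \<in> K"
    then have "coset_average Gs y (\<lambda>y. f (act (- g) (act l y))) = coset_average Gs y (\<lambda>y. f (act (- g) y))"
      for y using invariant_on_translates_coset_average unfolding invariant_on_translates_def by blast
    moreover have "f \<in> CX" using f CKX_subset_CX by blast
    then have "(\<lambda>y. f (act (- g) y)) \<in> CX" "(\<lambda>y. f (act (- g) (act l y))) \<in> CX"
      using CX_comp_act[OF CX_comp_act, of f "- g" l] by (auto intro: CX_comp_act)
    ultimately show "\<Phi> (\<lambda>y. f (act (- g) (act l y))) = \<Phi> (\<lambda>y. f (act (- g) y))"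
      by (simp add: \<Phi>_def \<Psi>_def)
  qed
  ultimately show ?thesis by blast
qed

definition lift_candidates ::
    "(('x \<Rightarrow> real) \<Rightarrow> real) \<Rightarrow> ('x \<Rightarrow> real) set \<Rightarrow> 'g set \<Rightarrow> real \<Rightarrow> (('x \<Rightarrow> real) \<Rightarrow> real) set"
  where "lift_candidates \<phi> A Gs \<epsilon> = {\<Phi>. is_state CX \<Phi> \<and> (\<forall>a\<in>A. \<bar>\<Phi> a - \<phi> a\<bar> \<le> \<epsilon>) \<and>
    invariant_on_translates Gs \<Phi>}"

lemma closed_lift_candidates: "closed (lift_candidates \<phi> A Gs \<epsilon>)"
  unfolding lift_candidates_def invariant_on_translates_def Ball_def
  by (intro closed_Collect_conj[OF closed_states] closed_Collect_conj closed_Collect_all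
      closed_imp_closed_Collect_imp closed_Collect_eq closed_Collect_le continuous_on_evaluation
      continuous_intros)

text \<open>By compactness of the bounded functionals, the approximate lifts have a common point.\<close>
lemma exists_invariant_lift:
  assumes st: "is_state (CKX act K) \<phi>"
  shows "\<exists>\<Phi>. is_state CX \<Phi> \<and> (\<forall>a\<in>CKX act K. \<Phi> a = \<phi> a) \<and> invariant_on_translates UNIV \<Phi>"
proof -
  define I :: "(('x \<Rightarrow> real) set \<times> 'g set \<times> real) set"
    where "I = {(A, Gs, \<epsilon>). finite A \<and> A \<subseteq> CKX act K \<and> finite Gs \<and> \<epsilon> > 0}"
  define T where "T = (\<lambda>(A, Gs, \<epsilon>). lift_candidates \<phi> A Gs \<epsilon>)"
  have "bounded_functionals CX \<inter> \<Inter>(T ` I) \<noteq> {}"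
  proof (rule compact_imp_fip_image[OF compact_bounded_functionals])
    show "closed (T i)" for i by (cases i) (simp add: T_def closed_lift_candidates)
  next
    fix I' assume I': "finite I'" "I' \<subseteq> I"
    define A where "A = (\<Union>(A, Gs, \<epsilon>)\<in>I'. A)"
    define Gs where "Gs = (\<Union>(A, Gs, \<epsilon>)\<in>I'. Gs)"
    define \<epsilon> where "\<epsilon> = Min (insert 1 ((\<lambda>(A, Gs, \<epsilon>). \<epsilon>) ` I'))"
    have "finite A" "A \<subseteq> CKX act K" "finite Gs" using I' by (auto simp: A_def Gs_def I_def)
    moreover have "\<epsilon> > 0" using I' by (auto simp: \<epsilon>_def I_def)
    ultimately obtain \<Phi> where "\<Phi> \<in> bounded_functionals CX" "is_state CX \<Phi>"
      "\<forall>a\<in>A. \<bar>\<Phi> a - \<phi> a\<bar> \<le> \<epsilon>" "invariant_on_translates Gs \<Phi>"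
      using approximate_lift[OF st] by metis
    moreover have "\<epsilon> \<le> \<epsilon>'" if "(A', Gs', \<epsilon>') \<in> I'" for A' Gs' \<epsilon>'
    proof -
      have "\<epsilon>' \<in> (\<lambda>(A, Gs, \<epsilon>). \<epsilon>) ` I'" using that by force
      then show ?thesis using I'(1) unfolding \<epsilon>_def by (intro Min_le) auto
    qed
    ultimately have "\<Phi> \<in> T i" if "i \<in> I'" for i
      using that by (cases i) (force simp: T_def lift_candidates_def invariant_on_translates_def
          A_def Gs_def)
    then show "bounded_functionals CX \<inter> \<Inter>(T ` I') \<noteq> {}"
      using \<open>\<Phi> \<in> bounded_functionals CX\<close> by blast
  qed
  then obtain \<Phi> where \<Phi>: "\<And>A Gs \<epsilon>. (A, Gs, \<epsilon>) \<in> I \<Longrightarrow> \<Phi> \<in> lift_candidates \<phi> A Gs \<epsilon>"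
    by (force simp: T_def)
  have "({}, {}, 1) \<in> I" by (simp add: I_def)
  then have "is_state CX \<Phi>" using \<Phi> by (simp add: lift_candidates_def)
  moreover have "\<Phi> a = \<phi> a" if "a \<in> CKX act K" for a
  proof -
    have "\<bar>\<Phi> a - \<phi> a\<bar> \<le> \<epsilon>" if "\<epsilon> > 0" for \<epsilon>
      using \<Phi>[of "{a}" "{}" \<epsilon>] \<open>a \<in> CKX act K\<close> that by (simp add: I_def lift_candidates_def)
    from this[of "\<bar>\<Phi> a - \<phi> a\<bar> / 2"] show ?thesis by (cases "\<Phi> a = \<phi> a") auto
  qed
  moreover have "invariant_on_translates {g} \<Phi>" for g
    using \<Phi>[of "{}" "{g}" 1] by (simp add: I_def lift_candidates_def)
  then have "invariant_on_translates UNIV \<Phi>" by (simp add: invariant_on_translates_def)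
  ultimately show ?thesis by blast
qed

lemma lift_state:
  assumes st: "is_state (CKX act K) \<phi>"
  obtains \<Phi> where "is_state CX \<Phi>"
    "\<And>f g. f \<in> CKX act K \<Longrightarrow> \<Phi> (\<lambda>y. f (act g y)) = \<phi> (hyp_act act K (- g) f)"
proof -
  obtain \<Phi> where \<Phi>: "is_state CX \<Phi>" "\<forall>a\<in>CKX act K. \<Phi> a = \<phi> a"
    "invariant_on_translates UNIV \<Phi>"
    using exists_invariant_lift[OF st] by blast
  have "\<Phi> (\<lambda>y. f (act g y)) = \<phi> (hyp_act act K (- g) f)" if f: "f \<in> CKX act K" for f g
  proof -
    have "\<Phi> (hyp_act act K (- g) f) = \<Phi> (\<lambda>y. f (act (- (- g)) y))"
      using \<Phi>(3) f unfolding invariant_on_translates_def by (intro state_hyp_act[OF \<Phi>(1) f]) blast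
    then show ?thesis using \<Phi>(2) hyp_act_mem_CKX[OF f] by simp
  qed
  with \<Phi>(1) show ?thesis by (rule that)
qed

end

section \<open>Weak* closures\<close>

lemma wstar_adherent_mono:
  "wstar_adherent C S \<phi> \<Longrightarrow> C' \<subseteq> C \<Longrightarrow> S \<subseteq> T \<Longrightarrow> wstar_adherent C' T \<phi>"
  unfolding wstar_adherent_def by (meson order.trans subsetD)

lemma wstar_adherent_eqI: "\<psi> \<in> S \<Longrightarrow> (\<And>f. f \<in> C \<Longrightarrow> \<psi> f = \<phi> f) \<Longrightarrow> wstar_adherent C S \<phi>"
  unfolding wstar_adherent_def by force

lemma wstar_adherent_trans:
  assumes \<phi>: "wstar_adherent C S \<phi>" and S: "\<And>\<psi>. \<psi> \<in> S \<Longrightarrow> wstar_adherent C T \<psi>"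
  shows "wstar_adherent C T \<phi>"
  unfolding wstar_adherent_def
proof (intro allI impI)
  fix F and \<epsilon> :: real assume F: "finite F \<and> F \<subseteq> C \<and> 0 < \<epsilon>"
  then have F2: "finite F \<and> F \<subseteq> C \<and> 0 < \<epsilon> / 2" by simp
  obtain \<psi> where "\<psi> \<in> S" and \<psi>: "\<forall>f\<in>F. \<bar>\<psi> f - \<phi> f\<bar> < \<epsilon> / 2"
    using \<phi> F2 unfolding wstar_adherent_def by blast
  moreover obtain \<xi> where "\<xi> \<in> T" and \<xi>: "\<forall>f\<in>F. \<bar>\<xi> f - \<psi> f\<bar> < \<epsilon> / 2"
    using S[OF \<open>\<psi> \<in> S\<close>] F2 unfolding wstar_adherent_def by blast
  ultimately show "\<exists>\<xi>\<in>T. \<forall>f\<in>F. \<bar>\<xi> f - \<phi> f\<bar> < \<epsilon>"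
  proof (intro bexI[of _ \<xi>] ballI)
    fix f assume "f \<in> F"
    then have "\<bar>\<psi> f - \<phi> f\<bar> < \<epsilon> / 2" "\<bar>\<xi> f - \<psi> f\<bar> < \<epsilon> / 2" using \<psi> \<xi> by blast+
    then show "\<bar>\<xi> f - \<phi> f\<bar> < \<epsilon>" by linarith
  qed
qed

lemma wstar_adherent_comp:
  assumes \<phi>: "wstar_adherent C' S \<phi>" and C: "\<And>f. f \<in> C \<Longrightarrow> (\<lambda>y. f (\<theta> y)) \<in> C'"
  shows "wstar_adherent C ((\<lambda>\<psi> f. \<psi> (\<lambda>y. f (\<theta> y))) ` S) (\<lambda>f. \<phi> (\<lambda>y. f (\<theta> y)))"
  unfolding wstar_adherent_def
proof (intro allI impI)
  fix F and \<epsilon> :: real assume F: "finite F \<and> F \<subseteq> C \<and> 0 < \<epsilon>"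
  let ?F = "(\<lambda>f y. f (\<theta> y)) ` F"
  have "finite ?F" using F by (intro finite_imageI) blast
  moreover have "?F \<subseteq> C'" using F C by auto
  ultimately obtain \<psi> where "\<psi> \<in> S" "\<forall>h\<in>?F. \<bar>\<psi> h - \<phi> h\<bar> < \<epsilon>"
    using \<phi> F unfolding wstar_adherent_def by blast
  then show "\<exists>\<xi>\<in>(\<lambda>\<psi> f. \<psi> (\<lambda>y. f (\<theta> y))) ` S. \<forall>f\<in>F. \<bar>\<xi> f - \<phi> (\<lambda>y. f (\<theta> y))\<bar> < \<epsilon>"
    by (intro bexI[of _ "\<lambda>f. \<psi> (\<lambda>y. f (\<theta> y))"]) auto
qed

lemma wstar_adherent_point_mass_closure:
  fixes y :: "'x::topological_space"
  assumes "y \<in> closure D"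
  shows "wstar_adherent CX ((\<lambda>d f. f d) ` D) (\<lambda>f. f y)"
  unfolding wstar_adherent_def
proof (intro allI impI)
  fix F :: "('x \<Rightarrow> real) set" and \<epsilon> :: real assume F: "finite F \<and> F \<subseteq> CX \<and> 0 < \<epsilon>"
  define U where "U = (\<Inter>f\<in>F. {u. \<bar>f u - f y\<bar> < \<epsilon>})"
  have "open U" unfolding U_def
    using F by (intro open_INT ballI open_Collect_less) (auto simp: CX_def subset_iff intro!: continuous_intros)
  moreover have "y \<in> U" using F by (simp add: U_def)
  ultimately obtain d where "d \<in> D" "d \<in> U"
    using assms open_Int_closure_eq_empty by blast
  then show "\<exists>\<psi>\<in>(\<lambda>d f. f d) ` D. \<forall>f\<in>F. \<bar>\<psi> f - f y\<bar> < \<epsilon>" by (auto simp: U_def)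
qed

lemma conv_functionals_sumI:
  assumes T: "finite T" and w: "\<And>y. y \<in> T \<Longrightarrow> 0 \<le> w y" "(\<Sum>y\<in>T. w y) = 1"
    and \<phi>: "\<And>y. y \<in> T \<Longrightarrow> \<phi>s y \<in> S"
  shows "(\<lambda>f. \<Sum>y\<in>T. w y * \<phi>s y f) \<in> conv_functionals S"
proof -
  obtain e where e: "bij_betw e {..<card T} T"
    using ex_bij_betw_nat_finite[OF T] by (auto simp: atLeast0LessThan)
  have reindex: "(\<Sum>i<card T. u (e i)) = (\<Sum>y\<in>T. u y)" for u :: "_ \<Rightarrow> real"
    by (rule sum.reindex_bij_betw[OF e])
  have "e i \<in> T" if "i < card T" for i using e that by (auto simp: bij_betw_def)
  then show ?thesis unfolding conv_functionals_def
    using w \<phi> reindex[of w] reindex[of "\<lambda>y. w y * \<phi>s y _"]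
    by (intro CollectI exI[of _ "card T"] exI[of _ "w \<circ> e"] exI[of _ "\<phi>s \<circ> e"]) auto
qed

lemma (in function_algebra) wstar_adherent_conv_functionals:
  assumes pts: "\<And>y. wstar_adherent C S (\<lambda>f. f y)" and st: "is_state C \<psi>"
  shows "wstar_adherent C (conv_functionals S) \<psi>"
  unfolding wstar_adherent_def
proof (intro allI impI)
  fix F and \<epsilon> :: real assume F: "finite F \<and> F \<subseteq> C \<and> 0 < \<epsilon>"
  then obtain T w where T: "finite T" "\<forall>y\<in>T. 0 \<le> w y" "(\<Sum>y\<in>T. w y) = 1"
    and approx: "\<forall>f\<in>F. \<bar>\<psi> f - (\<Sum>y\<in>T. w y * f y)\<bar> \<le> \<epsilon> / 4"
    using state_approx_by_point_masses[OF st, of "\<epsilon> / 4" F] by auto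
  have "\<forall>y. \<exists>\<phi>\<in>S. \<forall>f\<in>F. \<bar>\<phi> f - f y\<bar> < \<epsilon> / 2"
    using pts F unfolding wstar_adherent_def by (meson half_gt_zero)
  then obtain \<phi>s where \<phi>s: "\<And>y. \<phi>s y \<in> S" "\<And>y f. f \<in> F \<Longrightarrow> \<bar>\<phi>s y f - f y\<bar> < \<epsilon> / 2"
    by metis
  have "\<bar>(\<Sum>y\<in>T. w y * \<phi>s y f) - \<psi> f\<bar> < \<epsilon>" if f: "f \<in> F" for f
  proof -
    have "\<bar>(\<Sum>y\<in>T. w y * \<phi>s y f) - (\<Sum>y\<in>T. w y * f y)\<bar> \<le> (\<Sum>y\<in>T. w y * (\<epsilon> / 2))"
    proof (rule abs_sum_diff_le)
      fix y assume "y \<in> T"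
      then have "0 \<le> w y" "\<bar>\<phi>s y f - f y\<bar> \<le> \<epsilon> / 2" using T(2) \<phi>s(2)[OF f] less_imp_le by auto
      then have "w y * \<bar>\<phi>s y f - f y\<bar> \<le> w y * (\<epsilon> / 2)" by (rule mult_left_mono[rotated])
      then show "\<bar>w y * \<phi>s y f - w y * f y\<bar> \<le> w y * (\<epsilon> / 2)"
        using \<open>0 \<le> w y\<close> by (simp add: right_diff_distrib[symmetric] abs_mult)
    qed
    also have "\<dots> = \<epsilon> / 2" by (simp only: sum_distrib_right[symmetric] T(3) mult_1_left)
    finally have "\<bar>(\<Sum>y\<in>T. w y * \<phi>s y f) - (\<Sum>y\<in>T. w y * f y)\<bar> \<le> \<epsilon> / 2" .
    moreover have "\<bar>\<psi> f - (\<Sum>y\<in>T. w y * f y)\<bar> \<le> \<epsilon> / 4" using approx f by blast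
    ultimately show ?thesis using F by linarith
  qed
  moreover have "(\<lambda>f. \<Sum>y\<in>T. w y * \<phi>s y f) \<in> conv_functionals S"
    using T(2) by (intro conv_functionals_sumI[OF T(1) _ T(3) \<phi>s(1)]) blast
  ultimately show "\<exists>\<xi>\<in>conv_functionals S. \<forall>f\<in>F. \<bar>\<xi> f - \<psi> f\<bar> < \<epsilon>"
    by (intro bexI[of _ "\<lambda>f. \<Sum>y\<in>T. w y * \<phi>s y f"] ballI)
qed

section \<open>Minimality and strong proximality of the orbit space\<close>

context compact_open_subgroup_action
begin

lemma hyp_orbit_adherent_of_lift:
  assumes \<Phi>: "\<And>f g. f \<in> CKX act K \<Longrightarrow> \<Phi> (\<lambda>y. f (act g y)) = \<phi> (hyp_act act K (- g) f)"
    and adh: "wstar_adherent CX (range (\<lambda>g f. \<Phi> (\<lambda>y. f (act g y)))) \<xi>"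
  shows "wstar_adherent (CKX act K) (range (\<lambda>g f. \<phi> (hyp_act act K g f))) \<xi>"
proof (rule wstar_adherent_trans)
  show "wstar_adherent (CKX act K) (range (\<lambda>g f. \<Phi> (\<lambda>y. f (act g y)))) \<xi>"
    using adh CKX_subset_CX by (rule wstar_adherent_mono) simp
next
  fix \<psi> assume "\<psi> \<in> range (\<lambda>g f. \<Phi> (\<lambda>y. f (act g y)))"
  then obtain g where "\<psi> = (\<lambda>f. \<Phi> (\<lambda>y. f (act g y)))" by blast
  then show "wstar_adherent (CKX act K) (range (\<lambda>g f. \<phi> (hyp_act act K g f))) \<psi>"
    using \<Phi> by (intro wstar_adherent_eqI[of "\<lambda>f. \<phi> (hyp_act act K (- g) f)"]) auto
qed

lemma hyp_strongly_proximal: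
  assumes GB: "G_boundary act" and st: "is_state (CKX act K) \<phi>"
  shows "\<exists>x. wstar_adherent (CKX act K) (range (\<lambda>g f. \<phi> (hyp_act act K g f))) (\<lambda>f. f x)"
proof -
  obtain \<Phi> where \<Phi>: "is_state CX \<Phi>"
    "\<And>f g. f \<in> CKX act K \<Longrightarrow> \<Phi> (\<lambda>y. f (act g y)) = \<phi> (hyp_act act K (- g) f)"
    using lift_state[OF st] by blast
  obtain x where "wstar_adherent CX (range (\<lambda>g f. \<Phi> (\<lambda>y. f (act g y)))) (\<lambda>f. f x)"
    using GB \<Phi>(1) unfolding G_boundary_def by blast
  then show ?thesis using hyp_orbit_adherent_of_lift[where \<phi> = \<phi>, OF \<Phi>(2)] by blast
qed

lemma point_mass_adherent_hyp_orbit: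
  assumes GB: "G_boundary act"
  shows "wstar_adherent (CKX act K) (range (\<lambda>g f. hyp_act act K g f x)) (\<lambda>f. f y)"
proof -
  have "is_state (CKX act K) (\<lambda>f. f x)" by (simp add: is_state_def)
  then obtain \<Phi> where \<Phi>: "is_state CX \<Phi>"
    "\<And>f g. f \<in> CKX act K \<Longrightarrow> \<Phi> (\<lambda>y. f (act g y)) = hyp_act act K (- g) f x"
    by (rule lift_state) blast
  let ?R = "range (\<lambda>g f. \<Phi> (\<lambda>y. f (act g y)))"
  obtain z where z: "wstar_adherent CX ?R (\<lambda>f. f z)"
    using GB \<Phi>(1) unfolding G_boundary_def by blast
  have "wstar_adherent CX ?R (\<lambda>f. f (act a z))" for a
  proof -
    have "wstar_adherent CX ((\<lambda>\<psi> f. \<psi> (\<lambda>u. f (act a u))) ` ?R) (\<lambda>f. f (act a z))"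
      by (rule wstar_adherent_comp[OF z]) (rule CX_comp_act)
    moreover have "(\<lambda>\<psi> f. \<psi> (\<lambda>u. f (act a u))) ` ?R \<subseteq> ?R"
      by (auto simp: act_add[symmetric])
    ultimately show ?thesis by (rule wstar_adherent_mono[OF _ order.refl])
  qed
  moreover have "wstar_adherent CX ((\<lambda>d f. f d) ` range (\<lambda>a. act a z)) (\<lambda>f. f y)"
    using GB by (intro wstar_adherent_point_mass_closure) (simp add: G_boundary_def)
  ultimately have "wstar_adherent CX ?R (\<lambda>f. f y)"
    by (auto elim: wstar_adherent_trans)
  then show ?thesis using hyp_orbit_adherent_of_lift[where \<phi> = "\<lambda>f. f x", OF \<Phi>(2)] by simp
qed

end

theorem proposition4p7:
  fixes act :: "'g::{topological_group_add, t2_space} \<Rightarrow> 'x::t2_space \<Rightarrow> 'x"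
    and K :: "'g set"
  assumes "locally compact (UNIV :: 'g set)"
    and "totally_disconnected_set (UNIV :: 'g set)"
    and "is_subgroup K" and "compact K" and "open K"
    and "compact (UNIV :: 'x set)"
    and "continuous_action act"
    and "G_boundary act"
    and "totally_disconnected_top (orbit_space_top act K)"
  shows "hyp_boundary act K"
proof -
  interpret compact_open_subgroup_action act K
    using assms(3-7) by unfold_locales
  show ?thesis
    unfolding hyp_boundary_def
    using CKX.wstar_adherent_conv_functionals[OF point_mass_adherent_hyp_orbit[OF assms(8)]]
      hyp_strongly_proximal[OF assms(8)] by blast
qed

end
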